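(* Let $L\in\mathcal{N}$ and assume that $L$ is a sublattice of a free lattice. Let $K$ be a convex sublattice of $L$, and let $a\in L$ satisfy $a\parallel b$ for all $b\in K$. Then $|\{a\vee b: b\in K\}|\ge 3$, or $|\{a\wedge b: b\in K\}|\ge 3$, or $K$ is a distributive lattice.
   Context: $\mathcal{N}$ denotes the variety of lattices generated by the pentagon $N_5$. A convex sublattice of $L$ is a sublattice $K$ of $L$ such that whenever $x,z\in K$, $y\in L$ and $x\le y\le z$, then $y\in K$. For elements $x,y$, $x\parallel y$ means neither $x\le y$ nor $y\le x$. *)

theory Defs
  imports Main
begin

datatype 'v lterm = LVar 'v | LJoin "'v lterm" "'v lterm" | LMeet "'v lterm" "'v lterm"

fun lt_eval :: "('a \<Rightarrow> 'a \<Rightarrow> 'a) \<Rightarrow> ('a \<Rightarrow> 'a \<Rightarrow> 'a) \<Rightarrow> ('v \<Rightarrow> 'a) \<Rightarrow> 'v lterm \<Rightarrow> 'a" where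
  "lt_eval j m \<sigma> (LVar v) = \<sigma> v"
| "lt_eval j m \<sigma> (LJoin s t) = j (lt_eval j m \<sigma> s) (lt_eval j m \<sigma> t)"
| "lt_eval j m \<sigma> (LMeet s t) = m (lt_eval j m \<sigma> s) (lt_eval j m \<sigma> t)"

text \<open>N5 = {N0 < Na < Nc < N1, N0 < Nb < N1}, with Nb incomparable to Na and Nc.\<close>
datatype n5 = N0 | Na | Nb | Nc | N1

fun n5_le :: "n5 \<Rightarrow> n5 \<Rightarrow> bool" where
  "n5_le N0 _ = True"
| "n5_le _ N1 = True"
| "n5_le Na Na = True"
| "n5_le Na Nc = True"
| "n5_le Nb Nb = True"
| "n5_le Nc Nc = True"
| "n5_le _ _ = False"

definition n5_join :: "n5 \<Rightarrow> n5 \<Rightarrow> n5" where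
  "n5_join x y = (if n5_le x y then y else if n5_le y x then x else N1)"

definition n5_meet :: "n5 \<Rightarrow> n5 \<Rightarrow> n5" where
  "n5_meet x y = (if n5_le x y then x else if n5_le y x then y else N0)"

text \<open>The variety generated by N5 is the class of lattices satisfying every lattice
  identity (in countably many variables) that holds in N5.\<close>
definition in_variety_N5 :: "'a::lattice itself \<Rightarrow> bool" where
  "in_variety_N5 _ \<longleftrightarrow>
     (\<forall>s t :: nat lterm.
        (\<forall>\<sigma>::nat \<Rightarrow> n5. lt_eval n5_join n5_meet \<sigma> s = lt_eval n5_join n5_meet \<sigma> t) \<longrightarrow>
        (\<forall>\<sigma>::nat \<Rightarrow> 'a. lt_eval sup inf \<sigma> s = lt_eval sup inf \<sigma> t))"

text \<open>The free lattice FL(X) over the generators X (= UNIV :: 'x set) is the set of lattice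
  terms over X modulo the least congruence containing the lattice axioms.\<close>
inductive fl_eq :: "'x lterm \<Rightarrow> 'x lterm \<Rightarrow> bool" where
  fl_refl: "fl_eq s s"
| fl_sym: "fl_eq s t \<Longrightarrow> fl_eq t s"
| fl_trans: "fl_eq s t \<Longrightarrow> fl_eq t u \<Longrightarrow> fl_eq s u"
| fl_join_cong: "fl_eq s s' \<Longrightarrow> fl_eq t t' \<Longrightarrow> fl_eq (LJoin s t) (LJoin s' t')"
| fl_meet_cong: "fl_eq s s' \<Longrightarrow> fl_eq t t' \<Longrightarrow> fl_eq (LMeet s t) (LMeet s' t')"
| fl_join_comm: "fl_eq (LJoin s t) (LJoin t s)"
| fl_meet_comm: "fl_eq (LMeet s t) (LMeet t s)"
| fl_join_assoc: "fl_eq (LJoin (LJoin s t) u) (LJoin s (LJoin t u))"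
| fl_meet_assoc: "fl_eq (LMeet (LMeet s t) u) (LMeet s (LMeet t u))"
| fl_absorb_join: "fl_eq (LJoin s (LMeet s t)) s"
| fl_absorb_meet: "fl_eq (LMeet s (LJoin s t)) s"

text \<open>The lattice 'a is (isomorphic to) a sublattice of the free lattice FL('x):
  there is a lattice embedding of 'a into FL('x) (represented on terms, modulo fl_eq).\<close>
definition embeds_in_free_lattice :: "'a::lattice itself \<Rightarrow> 'x itself \<Rightarrow> bool" where
  "embeds_in_free_lattice _ _ \<longleftrightarrow>
     (\<exists>f :: 'a \<Rightarrow> 'x lterm.
        (\<forall>x y. fl_eq (f x) (f y) \<longrightarrow> x = y) \<and>
        (\<forall>x y. fl_eq (f (sup x y)) (LJoin (f x) (f y))) \<and>
        (\<forall>x y. fl_eq (f (inf x y)) (LMeet (f x) (f y))))"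

definition convex_sublattice :: "'a::lattice set \<Rightarrow> bool" where
  "convex_sublattice K \<longleftrightarrow>
     (\<forall>x\<in>K. \<forall>y\<in>K. sup x y \<in> K \<and> inf x y \<in> K) \<and>
     (\<forall>x\<in>K. \<forall>z\<in>K. \<forall>y. x \<le> y \<and> y \<le> z \<longrightarrow> y \<in> K)"

definition incomparable :: "'a::order \<Rightarrow> 'a \<Rightarrow> bool" (infix "\<parallel>" 50) where
  "x \<parallel> y \<longleftrightarrow> \<not> x \<le> y \<and> \<not> y \<le> x"

definition distributive_on :: "'a::lattice set \<Rightarrow> bool" where
  "distributive_on K \<longleftrightarrow>
     (\<forall>x\<in>K. \<forall>y\<in>K. \<forall>z\<in>K. inf x (sup y z) = sup (inf x y) (inf x z))"

end

theory Submission
  imports Defs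
begin

text \<open>Sublattices of free lattices satisfy Whitman's condition (W), which can be read off from
  Whitman's recursive description of the order of a free lattice. Lattices in \<open>\<N>\<close> are
  semidistributive, so a non-distributive sublattice \<open>K\<close> contains a pentagon
  \<open>lo < p < q < hi\<close>, \<open>lo < r < hi\<close>. If \<open>a \<squnion> -\<close> and \<open>a \<sqinter> -\<close> took at most two values on \<open>K\<close>,
  semidistributivity and two inequalities valid in N5 would determine these values on the pentagon
  so far that \<open>(a \<squnion> lo) \<sqinter> (p \<squnion> (a \<sqinter> r)) \<le> ((a \<squnion> lo) \<sqinter> p) \<squnion> (a \<sqinter> r)\<close>, an instance of (W)
  whose four possible conclusions all fail.\<close>

text \<open>Whitman's order on lattice terms; its last clause is the source of condition (W).\<close>
fun whitman_le :: "'x lterm \<Rightarrow> 'x lterm \<Rightarrow> bool" where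
  "whitman_le (LJoin s1 s2) t = (whitman_le s1 t \<and> whitman_le s2 t)"
| "whitman_le s (LMeet t1 t2) = (whitman_le s t1 \<and> whitman_le s t2)"
| "whitman_le (LVar x) (LVar y) = (x = y)"
| "whitman_le (LVar x) (LJoin t1 t2) = (whitman_le (LVar x) t1 \<or> whitman_le (LVar x) t2)"
| "whitman_le (LMeet s1 s2) (LVar y) = (whitman_le s1 (LVar y) \<or> whitman_le s2 (LVar y))"
| "whitman_le (LMeet s1 s2) (LJoin t1 t2) =
     (whitman_le s1 (LJoin t1 t2) \<or> whitman_le s2 (LJoin t1 t2) \<or>
      whitman_le (LMeet s1 s2) t1 \<or> whitman_le (LMeet s1 s2) t2)"

lemma whitman_le_LMeet_iff: "whitman_le s (LMeet t1 t2) = (whitman_le s t1 \<and> whitman_le s t2)"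
  by (induction s) auto

lemma whitman_le_LJoinI1: "whitman_le s t \<Longrightarrow> whitman_le s (LJoin t u)"
  by (induction s) auto

lemma whitman_le_LJoinI2: "whitman_le s t \<Longrightarrow> whitman_le s (LJoin u t)"
  by (induction s) auto

lemma whitman_le_LMeetI1: "whitman_le s t \<Longrightarrow> whitman_le (LMeet s u) t"
  by (induction t) (auto simp: whitman_le_LMeet_iff)

lemma whitman_le_LMeetI2: "whitman_le s t \<Longrightarrow> whitman_le (LMeet u s) t"
  by (induction t) (auto simp: whitman_le_LMeet_iff)

lemma whitman_le_trans:
  fixes s t u :: "'x lterm"
  shows "whitman_le s t \<Longrightarrow> whitman_le t u \<Longrightarrow> whitman_le s u"
proof (induction "size s + size t + size u" arbitrary: s t u rule: less_induct)
  case less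
  have IH: "whitman_le s' u'" if "whitman_le s' t'" "whitman_le t' u'"
    "size s' + size t' + size u' < size s + size t + size u" for s' t' u' :: "'x lterm"
    using less.hyps that by blast
  note st = \<open>whitman_le s t\<close> and tu = \<open>whitman_le t u\<close>
  consider (join_left) s1 s2 where "s = LJoin s1 s2" | (meet_right) u1 u2 where "u = LMeet u1 u2"
    | (other) "\<forall>s1 s2. s \<noteq> LJoin s1 s2" "\<forall>u1 u2. u \<noteq> LMeet u1 u2"
    by blast
  then show ?case
  proof cases
    case join_left
    then show ?thesis using st tu IH[of s1 t u] IH[of s2 t u] by auto
  next
    case meet_right
    then show ?thesis using st tu IH[of s t u1] IH[of s t u2] by (auto simp: whitman_le_LMeet_iff)
  next
    case other
    show ?thesis
    proof (cases t)
      case (LVar z)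
      then show ?thesis using other st tu
        by (cases s; cases u) (auto intro: whitman_le_LMeetI1 whitman_le_LMeetI2 dest: IH)
    next
      case (LJoin t1 t2)
      then show ?thesis using other st tu
        by (cases s; cases u) (auto intro: whitman_le_LMeetI1 whitman_le_LMeetI2 dest: IH)
    next
      case (LMeet t1 t2)
      show ?thesis
      proof (cases u)
        case (LJoin u1 u2)
        then show ?thesis using LMeet other st tu IH[of s t1 u] IH[of s t2 u] IH[of s t u1] IH[of s t u2]
          by (cases s) (auto simp: whitman_le_LMeet_iff intro: whitman_le_LJoinI1 whitman_le_LJoinI2)
      qed (use LMeet other st tu IH[of s t1 u] IH[of s t2 u] in \<open>auto simp: whitman_le_LMeet_iff\<close>)
    qed
  qed
qed

lemma whitman_le_refl: "whitman_le s s"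
  by (induction s) (auto intro: whitman_le_LJoinI1 whitman_le_LJoinI2 whitman_le_LMeetI1 whitman_le_LMeetI2)

lemma whitman_le_LJoin_mono: "whitman_le s s' \<Longrightarrow> whitman_le t t' \<Longrightarrow> whitman_le (LJoin s t) (LJoin s' t')"
  by (simp add: whitman_le_LJoinI1 whitman_le_LJoinI2)

lemma whitman_le_LMeet_mono: "whitman_le s s' \<Longrightarrow> whitman_le t t' \<Longrightarrow> whitman_le (LMeet s t) (LMeet s' t')"
  by (simp add: whitman_le_LMeet_iff whitman_le_LMeetI1 whitman_le_LMeetI2)

lemma fl_eq_imp_whitman_le: "fl_eq s t \<Longrightarrow> whitman_le s t \<and> whitman_le t s"
  by (induction rule: fl_eq.induct)
     (auto simp: whitman_le_LMeet_iff intro: whitman_le_refl whitman_le_trans whitman_le_LJoin_mono whitman_le_LMeet_mono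
       whitman_le_LJoinI1 whitman_le_LJoinI2 whitman_le_LMeetI1 whitman_le_LMeetI2)

lemmas [trans] = fl_trans

definition fl_le :: "'x lterm \<Rightarrow> 'x lterm \<Rightarrow> bool" where
  "fl_le s t \<longleftrightarrow> fl_eq (LJoin s t) t"

lemma fl_LJoin_idem: "fl_eq (LJoin s s) s"
proof -
  have "fl_eq (LJoin s s) (LJoin s (LMeet s (LJoin s s)))"
    by (rule fl_join_cong[OF fl_refl fl_sym[OF fl_absorb_meet]])
  also have "fl_eq \<dots> s" by (rule fl_absorb_join)
  finally show ?thesis .
qed

lemma fl_LMeet_idem: "fl_eq (LMeet s s) s"
proof -
  have "fl_eq (LMeet s s) (LMeet s (LJoin s (LMeet s s)))"
    by (rule fl_meet_cong[OF fl_refl fl_sym[OF fl_absorb_join]])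
  also have "fl_eq \<dots> s" by (rule fl_absorb_meet)
  finally show ?thesis .
qed

lemma fl_le_iff_LMeet: "fl_le s t \<longleftrightarrow> fl_eq (LMeet s t) s"
proof
  assume "fl_le s t"
  then have "fl_eq (LMeet s t) (LMeet s (LJoin s t))"
    unfolding fl_le_def by (rule fl_meet_cong[OF fl_refl fl_sym])
  also have "fl_eq \<dots> s" by (rule fl_absorb_meet)
  finally show "fl_eq (LMeet s t) s" .
next
  assume "fl_eq (LMeet s t) s"
  then have "fl_eq (LJoin s t) (LJoin (LMeet s t) t)"
    by (rule fl_join_cong[OF fl_sym fl_refl])
  also have "fl_eq \<dots> (LJoin t (LMeet t s))"
    by (rule fl_trans[OF fl_join_comm fl_join_cong[OF fl_refl fl_meet_comm]])
  also have "fl_eq \<dots> t" by (rule fl_absorb_join)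
  finally show "fl_le s t" unfolding fl_le_def .
qed

lemma fl_le_refl: "fl_le s s"
  unfolding fl_le_def by (rule fl_LJoin_idem)

lemma fl_le_trans: "fl_le s t \<Longrightarrow> fl_le t u \<Longrightarrow> fl_le s u"
  unfolding fl_le_def
proof -
  assume st: "fl_eq (LJoin s t) t" and tu: "fl_eq (LJoin t u) u"
  have "fl_eq (LJoin s u) (LJoin s (LJoin t u))" by (rule fl_join_cong[OF fl_refl fl_sym[OF tu]])
  also have "fl_eq \<dots> (LJoin (LJoin s t) u)" by (rule fl_sym[OF fl_join_assoc])
  also have "fl_eq \<dots> (LJoin t u)" by (rule fl_join_cong[OF st fl_refl])
  also have "fl_eq \<dots> u" by (rule tu)
  finally show "fl_eq (LJoin s u) u" .
qed

lemma fl_le_LJoin1: "fl_le s (LJoin s t)"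
proof -
  have "fl_eq (LJoin s (LJoin s t)) (LJoin (LJoin s s) t)" by (rule fl_sym[OF fl_join_assoc])
  also have "fl_eq \<dots> (LJoin s t)" by (rule fl_join_cong[OF fl_LJoin_idem fl_refl])
  finally show ?thesis unfolding fl_le_def .
qed

lemma fl_le_LJoin2: "fl_le t (LJoin s t)"
proof -
  have "fl_eq (LJoin t (LJoin s t)) (LJoin t (LJoin t s))" by (rule fl_join_cong[OF fl_refl fl_join_comm])
  also have "fl_eq \<dots> (LJoin t s)" using fl_le_LJoin1 unfolding fl_le_def .
  also have "fl_eq \<dots> (LJoin s t)" by (rule fl_join_comm)
  finally show ?thesis unfolding fl_le_def .
qed

lemma fl_LJoin_le: "fl_le s1 t \<Longrightarrow> fl_le s2 t \<Longrightarrow> fl_le (LJoin s1 s2) t"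
  unfolding fl_le_def
proof -
  assume h1: "fl_eq (LJoin s1 t) t" and h2: "fl_eq (LJoin s2 t) t"
  have "fl_eq (LJoin (LJoin s1 s2) t) (LJoin s1 (LJoin s2 t))" by (rule fl_join_assoc)
  also have "fl_eq \<dots> (LJoin s1 t)" by (rule fl_join_cong[OF fl_refl h2])
  also have "fl_eq \<dots> t" by (rule h1)
  finally show "fl_eq (LJoin (LJoin s1 s2) t) t" .
qed

lemma fl_LMeet_le1: "fl_le (LMeet s t) s"
proof -
  have "fl_eq (LMeet (LMeet s t) s) (LMeet s (LMeet s t))" by (rule fl_meet_comm)
  also have "fl_eq \<dots> (LMeet (LMeet s s) t)" by (rule fl_sym[OF fl_meet_assoc])
  also have "fl_eq \<dots> (LMeet s t)" by (rule fl_meet_cong[OF fl_LMeet_idem fl_refl])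
  finally show ?thesis unfolding fl_le_iff_LMeet .
qed

lemma fl_LMeet_le2: "fl_le (LMeet s t) t"
proof -
  have "fl_eq (LMeet (LMeet s t) t) (LMeet s (LMeet t t))" by (rule fl_meet_assoc)
  also have "fl_eq \<dots> (LMeet s t)" by (rule fl_meet_cong[OF fl_refl fl_LMeet_idem])
  finally show ?thesis unfolding fl_le_iff_LMeet .
qed

lemma fl_le_LMeet: "fl_le s t1 \<Longrightarrow> fl_le s t2 \<Longrightarrow> fl_le s (LMeet t1 t2)"
  unfolding fl_le_iff_LMeet
proof -
  assume h1: "fl_eq (LMeet s t1) s" and h2: "fl_eq (LMeet s t2) s"
  have "fl_eq (LMeet s (LMeet t1 t2)) (LMeet (LMeet s t1) t2)" by (rule fl_sym[OF fl_meet_assoc])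
  also have "fl_eq \<dots> (LMeet s t2)" by (rule fl_meet_cong[OF h1 fl_refl])
  also have "fl_eq \<dots> s" by (rule h2)
  finally show "fl_eq (LMeet s (LMeet t1 t2)) s" .
qed

lemma whitman_le_imp_fl_le: "whitman_le s t \<Longrightarrow> fl_le s t"
  by (induction s t rule: whitman_le.induct)
     (auto intro: fl_le_refl fl_LJoin_le fl_le_LMeet fl_le_trans[OF _ fl_le_LJoin1]
       fl_le_trans[OF _ fl_le_LJoin2] fl_le_trans[OF fl_LMeet_le1] fl_le_trans[OF fl_LMeet_le2])

definition whitman_condition :: "'a::lattice itself \<Rightarrow> bool" where
  "whitman_condition _ \<longleftrightarrow>
     (\<forall>x y u v :: 'a. inf x y \<le> sup u v \<longrightarrow>
        x \<le> sup u v \<or> y \<le> sup u v \<or> inf x y \<le> u \<or> inf x y \<le> v)"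

lemma whitman_conditionD:
  "whitman_condition TYPE('a::lattice) \<Longrightarrow> inf x y \<le> sup u v \<Longrightarrow>
    x \<le> sup u v \<or> y \<le> sup u v \<or> inf x y \<le> u \<or> inf x y \<le> (v :: 'a)"
  unfolding whitman_condition_def by blast

lemma lattice_embedding_le_iff_whitman_le:
  fixes f :: "'a::lattice \<Rightarrow> 'x lterm"
  assumes inj: "\<forall>x y. fl_eq (f x) (f y) \<longrightarrow> x = y"
    and hom_sup: "\<forall>x y. fl_eq (f (sup x y)) (LJoin (f x) (f y))"
  shows "x \<le> y \<longleftrightarrow> whitman_le (f x) (f y)"
proof
  assume "x \<le> y"
  then have "fl_eq (f y) (LJoin (f x) (f y))" using hom_sup by (metis sup.absorb2)
  then show "whitman_le (f x) (f y)" using fl_eq_imp_whitman_le by fastforce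
next
  assume "whitman_le (f x) (f y)"
  then have "fl_eq (f (sup x y)) (f y)"
    using hom_sup whitman_le_imp_fl_le unfolding fl_le_def by (blast intro: fl_trans)
  then show "x \<le> y" using inj by (metis sup.cobounded1)
qed

lemma free_sublattice_whitman_condition:
  assumes "embeds_in_free_lattice TYPE('a::lattice) TYPE('x)"
  shows "whitman_condition TYPE('a)"
  unfolding whitman_condition_def
proof (intro allI impI)
  fix x y u v :: 'a
  assume le: "inf x y \<le> sup u v"
  obtain f :: "'a \<Rightarrow> 'x lterm" where
    inj: "\<forall>x y. fl_eq (f x) (f y) \<longrightarrow> x = y" and
    hom_sup: "\<forall>x y. fl_eq (f (sup x y)) (LJoin (f x) (f y))" and
    hom_inf: "\<forall>x y. fl_eq (f (inf x y)) (LMeet (f x) (f y))"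
    using assms unfolding embeds_in_free_lattice_def by blast
  note le_iff = lattice_embedding_le_iff_whitman_le[OF inj hom_sup]
  have "whitman_le (f (inf x y)) (f (sup u v))" using le le_iff by blast
  then have "whitman_le (LMeet (f x) (f y)) (LJoin (f u) (f v))"
    using fl_eq_imp_whitman_le hom_sup hom_inf by (blast intro: whitman_le_trans)
  then have "whitman_le (f x) (LJoin (f u) (f v)) \<or> whitman_le (f y) (LJoin (f u) (f v)) \<or>
      whitman_le (LMeet (f x) (f y)) (f u) \<or> whitman_le (LMeet (f x) (f y)) (f v)"
    by simp
  then show "x \<le> sup u v \<or> y \<le> sup u v \<or> inf x y \<le> u \<or> inf x y \<le> v"
    using le_iff fl_eq_imp_whitman_le hom_sup hom_inf by (blast intro: whitman_le_trans)
qed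

lemma n5_join_meet_table [simp]:
  "n5_join N0 x = x" "n5_join x N0 = x" "n5_join N1 x = N1" "n5_join x N1 = N1"
  "n5_meet N0 x = N0" "n5_meet x N0 = N0" "n5_meet N1 x = x" "n5_meet x N1 = x"
  "n5_join x x = x" "n5_meet x x = x"
  "n5_join Na Nb = N1" "n5_join Nb Na = N1" "n5_join Nc Nb = N1" "n5_join Nb Nc = N1"
  "n5_join Na Nc = Nc" "n5_join Nc Na = Nc"
  "n5_meet Na Nb = N0" "n5_meet Nb Na = N0" "n5_meet Nc Nb = N0" "n5_meet Nb Nc = N0"
  "n5_meet Na Nc = Na" "n5_meet Nc Na = Na"
  by (cases x; simp add: n5_join_def n5_meet_def)+

lemma N5_variety_identity:
  assumes "in_variety_N5 TYPE('a::lattice)"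
    and "\<And>\<sigma>::nat \<Rightarrow> n5. lt_eval n5_join n5_meet \<sigma> s = lt_eval n5_join n5_meet \<sigma> t"
  shows "lt_eval sup inf (\<rho>::nat \<Rightarrow> 'a) s = lt_eval sup inf \<rho> t"
  using assms unfolding in_variety_N5_def by blast

lemma N5_variety_meet_semidistrib:
  fixes x y z :: "'a::lattice"
  assumes "in_variety_N5 TYPE('a)" and "inf x y = inf x z"
  shows "inf x (sup y z) = inf x y"
proof -
  let ?s = "LMeet (LVar 0) (LJoin (LVar 1) (LVar (2::nat)))"
  let ?t = "LMeet (LVar 0) (LJoin (LVar 1) (LMeet (LVar 0) (LJoin (LVar 2) (LMeet (LVar 0) (LVar 1)))))"
  have "lt_eval sup inf ((!) [x, y, z]) ?s = lt_eval sup inf ((!) [x, y, z]) ?t"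
  proof (rule N5_variety_identity[OF assms(1)])
    show "lt_eval n5_join n5_meet \<sigma> ?s = lt_eval n5_join n5_meet \<sigma> ?t" for \<sigma>
      by (cases "\<sigma> 0"; cases "\<sigma> 1"; cases "\<sigma> 2"; simp)
  qed
  then have "inf x (sup y z) = inf x (sup y (inf x (sup z (inf x y))))" by simp
  also have "\<dots> = inf x y"
    using assms(2) by (metis inf.cobounded2 sup.absorb1)
  finally show ?thesis .
qed

lemma N5_variety_join_semidistrib:
  fixes x y z :: "'a::lattice"
  assumes "in_variety_N5 TYPE('a)" and "sup x y = sup x z"
  shows "sup x (inf y z) = sup x y"
proof -
  let ?s = "LJoin (LVar 0) (LMeet (LVar 1) (LVar (2::nat)))"
  let ?t = "LJoin (LVar 0) (LMeet (LVar 1) (LJoin (LVar 0) (LMeet (LVar 2) (LJoin (LVar 0) (LVar 1)))))"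
  have "lt_eval sup inf ((!) [x, y, z]) ?s = lt_eval sup inf ((!) [x, y, z]) ?t"
  proof (rule N5_variety_identity[OF assms(1)])
    show "lt_eval n5_join n5_meet \<sigma> ?s = lt_eval n5_join n5_meet \<sigma> ?t" for \<sigma>
      by (cases "\<sigma> 0"; cases "\<sigma> 1"; cases "\<sigma> 2"; simp)
  qed
  then have "sup x (inf y z) = sup x (inf y (sup x (inf z (sup x y))))" by simp
  also have "\<dots> = sup x y"
    using assms(2) by (metis sup.cobounded2 inf.absorb1)
  finally show ?thesis .
qed

lemma N5_law:
  fixes x p q r :: "'a::lattice"
  assumes "in_variety_N5 TYPE('a)"
  shows "inf (inf (sup q p) (sup p r)) (sup x p) \<le>
     sup (sup (sup p (inf x r)) (inf (sup q p) r)) (inf x (sup q p))" (is "?A \<le> ?B")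
proof -
  let ?s = "LMeet (LMeet (LMeet (LJoin (LVar 2) (LVar 1)) (LJoin (LVar 1) (LVar 3))) (LJoin (LVar 0) (LVar 1)))
     (LJoin (LJoin (LJoin (LVar 1) (LMeet (LVar 0) (LVar 3))) (LMeet (LJoin (LVar 2) (LVar 1)) (LVar 3)))
       (LMeet (LVar 0) (LJoin (LVar 2) (LVar (1::nat)))))"
  let ?t = "LMeet (LMeet (LJoin (LVar 2) (LVar 1)) (LJoin (LVar 1) (LVar 3))) (LJoin (LVar 0) (LVar (1::nat)))"
  have "lt_eval sup inf ((!) [x, p, q, r]) ?s = lt_eval sup inf ((!) [x, p, q, r]) ?t"
  proof (rule N5_variety_identity[OF assms])
    show "lt_eval n5_join n5_meet \<sigma> ?s = lt_eval n5_join n5_meet \<sigma> ?t" for \<sigma>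
      by (cases "\<sigma> 0"; cases "\<sigma> 1"; cases "\<sigma> 2"; cases "\<sigma> 3"; simp)
  qed
  then have "inf ?A ?B = ?A" by simp
  then show ?thesis by (metis inf.orderI)
qed

lemma N5_law_dual:
  fixes x p q r :: "'a::lattice"
  assumes "in_variety_N5 TYPE('a)"
  shows "inf (inf (inf p (sup x r)) (sup (inf q p) r)) (sup x (inf q p)) \<le>
     sup (sup (inf q p) (inf p r)) (inf x p)" (is "?B \<le> ?A")
proof -
  let ?s = "LJoin (LJoin (LJoin (LMeet (LVar 2) (LVar 1)) (LMeet (LVar 1) (LVar 3))) (LMeet (LVar 0) (LVar 1)))
     (LMeet (LMeet (LMeet (LVar 1) (LJoin (LVar 0) (LVar 3))) (LJoin (LMeet (LVar 2) (LVar 1)) (LVar 3)))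
       (LJoin (LVar 0) (LMeet (LVar 2) (LVar (1::nat)))))"
  let ?t = "LJoin (LJoin (LMeet (LVar 2) (LVar 1)) (LMeet (LVar 1) (LVar 3))) (LMeet (LVar 0) (LVar (1::nat)))"
  have "lt_eval sup inf ((!) [x, p, q, r]) ?s = lt_eval sup inf ((!) [x, p, q, r]) ?t"
  proof (rule N5_variety_identity[OF assms])
    show "lt_eval n5_join n5_meet \<sigma> ?s = lt_eval n5_join n5_meet \<sigma> ?t" for \<sigma>
      by (cases "\<sigma> 0"; cases "\<sigma> 1"; cases "\<sigma> 2"; cases "\<sigma> 3"; simp)
  qed
  then have "sup ?A ?B = ?A" by simp
  then show ?thesis by (metis sup.orderI)
qed

lemma card_image_le_2_collision:
  assumes "finite S" "card (f ` S) \<le> 2" "x \<in> S" "y \<in> S" "z \<in> S"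
  shows "f x = f y \<or> f x = f z \<or> f y = f z"
proof (rule ccontr)
  assume "\<not> ?thesis"
  then have "card {f x, f y, f z} = 3" by auto
  moreover have "card {f x, f y, f z} \<le> card (f ` S)" using assms by (intro card_mono) auto
  ultimately show False using assms(2) by simp
qed

lemma distributive_on_if_modular_on:
  fixes K :: "'a::lattice set"
  assumes inf_closed: "\<And>x y. x \<in> K \<Longrightarrow> y \<in> K \<Longrightarrow> inf x y \<in> K"
    and meet_semidistrib: "\<And>x y z :: 'a. inf x y = inf x z \<Longrightarrow> inf x (sup y z) = inf x y"
    and modular: "\<And>u w v. u \<in> K \<Longrightarrow> w \<in> K \<Longrightarrow> v \<in> K \<Longrightarrow> u \<le> w \<Longrightarrow>
       inf w (sup v u) = sup (inf w v) u"
  shows "distributive_on K"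
  unfolding distributive_on_def
proof (intro ballI)
  fix x y z assume K: "x \<in> K" "y \<in> K" "z \<in> K"
  define m where "m = sup (inf x y) (inf x z)"
  have y_part: "inf x (sup y (inf x z)) = m"
    using modular[OF inf_closed[OF K(1) K(3)] K(1) K(2)] unfolding m_def by simp
  have z_part: "inf x (sup z (inf x y)) = m"
    using modular[OF inf_closed[OF K(1) K(2)] K(1) K(3)] unfolding m_def by (simp add: sup_commute)
  have "sup (sup y (inf x z)) (sup z (inf x y)) = sup y z"
    by (rule antisym) (auto intro: le_supI1 le_supI2 le_infI2)
  then have "inf x (sup y z) = inf x (sup y (inf x z))"
    using meet_semidistrib y_part z_part by metis
  then show "inf x (sup y z) = sup (inf x y) (inf x z)" using y_part m_def by simp
qed

lemma pentagon_if_not_distributive_on: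
  fixes K :: "'a::lattice set"
  assumes sup_closed: "\<And>x y. x \<in> K \<Longrightarrow> y \<in> K \<Longrightarrow> sup x y \<in> K"
    and inf_closed: "\<And>x y. x \<in> K \<Longrightarrow> y \<in> K \<Longrightarrow> inf x y \<in> K"
    and meet_semidistrib: "\<And>x y z :: 'a. inf x y = inf x z \<Longrightarrow> inf x (sup y z) = inf x y"
    and "\<not> distributive_on K"
  obtains p q r where "p \<in> K" "q \<in> K" "r \<in> K" "p < q" "inf p r = inf q r" "sup p r = sup q r"
proof -
  obtain u w v where K: "u \<in> K" "w \<in> K" "v \<in> K" and "u \<le> w"
    and not_modular: "inf w (sup v u) \<noteq> sup (inf w v) u"
    using distributive_on_if_modular_on[OF inf_closed meet_semidistrib] assms(4) by blast
  define p where "p = sup (inf w v) u"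
  define q where "q = inf w (sup v u)"
  have "p \<le> q" unfolding p_def q_def using \<open>u \<le> w\<close>
    by (auto intro: le_infI le_supI le_infI1 le_supI2 le_infI2 le_supI1)
  moreover have "p \<noteq> q" using not_modular unfolding p_def q_def by simp
  ultimately have "p < q" by simp
  have inf_q: "inf q v = inf w v" unfolding q_def
    by (rule antisym) (auto intro: le_infI1 le_infI2 le_supI1)
  have inf_p: "inf p v = inf w v"
  proof (rule antisym)
    show "inf p v \<le> inf w v" using \<open>p \<le> q\<close> inf_q by (metis inf_mono order_refl)
    show "inf w v \<le> inf p v" unfolding p_def by (auto intro: le_supI1)
  qed
  have "sup p v = sup u v" unfolding p_def
    by (rule antisym) (auto intro: le_supI1 le_supI2 le_infI2)
  moreover have "sup q v = sup u v" unfolding q_def using \<open>u \<le> w\<close>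
    by (intro antisym) (auto intro: le_supI1 le_supI2 le_infI2 simp: sup_commute)
  moreover have "p \<in> K" "q \<in> K" unfolding p_def q_def using K sup_closed inf_closed by blast+
  ultimately show thesis using that K(3) \<open>p < q\<close> inf_p inf_q by simp
qed

locale pentagon_with_parallel =
  fixes a p q r lo hi :: "'a::lattice"
  assumes N5: "in_variety_N5 TYPE('a)"
    and p_less_q: "p < q"
    and inf_p_r: "inf p r = lo" and inf_q_r: "inf q r = lo"
    and sup_p_r: "sup p r = hi" and sup_q_r: "sup q r = hi"
    and parallel_lo: "a \<parallel> lo" and parallel_hi: "a \<parallel> hi"
    and sup_values: "card (sup a ` {lo, p, q, r, hi}) \<le> 2"
    and inf_values: "card (inf a ` {lo, p, q, r, hi}) \<le> 2"
begin

lemma sup_collision: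
  "x \<in> {lo, p, q, r, hi} \<Longrightarrow> y \<in> {lo, p, q, r, hi} \<Longrightarrow> z \<in> {lo, p, q, r, hi} \<Longrightarrow>
    sup a x = sup a y \<or> sup a x = sup a z \<or> sup a y = sup a z"
  by (rule card_image_le_2_collision[OF _ sup_values]) auto

lemma inf_collision:
  "x \<in> {lo, p, q, r, hi} \<Longrightarrow> y \<in> {lo, p, q, r, hi} \<Longrightarrow> z \<in> {lo, p, q, r, hi} \<Longrightarrow>
    inf a x = inf a y \<or> inf a x = inf a z \<or> inf a y = inf a z"
  by (rule card_image_le_2_collision[OF _ inf_values]) auto

lemma p_le_q: "p \<le> q"
  using p_less_q by simp

lemma lo_le: "lo \<le> p" "lo \<le> q" "lo \<le> r"
  using inf_le1[of p r] inf_le1[of q r] inf_le2[of p r] unfolding inf_p_r inf_q_r by simp_all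

lemma le_hi: "p \<le> hi" "q \<le> hi" "r \<le> hi"
  using sup_ge1[of p r] sup_ge1[of q r] sup_ge2[of r p] unfolding sup_p_r sup_q_r by simp_all

lemma sup_a_p_eq_q: "sup a p = sup a q"
proof (rule ccontr)
  assume ne: "sup a p \<noteq> sup a q"
  have sup_a_lo: "sup a lo = sup a p"
    using sup_collision[of lo p q] ne sup_mono[OF order_refl lo_le(1)] sup_mono[OF order_refl p_le_q]
    by (metis antisym insertI1 insertI2)
  have "sup a p \<noteq> sup a r"
  proof
    assume "sup a p = sup a r"
    then have "sup a hi = sup a p" unfolding sup_p_r[symmetric] by (metis sup.idem sup_left_commute)
    then show False using ne sup_mono[OF order_refl p_le_q] sup_mono[OF order_refl le_hi(2)] by (metis antisym)
  qed
  moreover have "sup a q \<noteq> sup a r"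
  proof
    assume "sup a q = sup a r"
    then have "sup a (inf q r) = sup a q" by (rule N5_variety_join_semidistrib[OF N5])
    then show False using sup_a_lo ne inf_q_r by simp
  qed
  ultimately show False using sup_collision[of p q r] ne by blast
qed

lemma inf_a_p_eq_q: "inf a p = inf a q"
proof (rule ccontr)
  assume ne: "inf a p \<noteq> inf a q"
  have inf_a_hi: "inf a hi = inf a q"
    using inf_collision[of p q hi] ne inf_mono[OF order_refl p_le_q] inf_mono[OF order_refl le_hi(2)]
    by (metis antisym insertI1 insertI2)
  have "inf a p \<noteq> inf a r"
  proof
    assume "inf a p = inf a r"
    then have "inf a (sup p r) = inf a p" by (rule N5_variety_meet_semidistrib[OF N5])
    then show False using inf_a_hi ne sup_p_r by simp
  qed
  moreover have "inf a q \<noteq> inf a r"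
  proof
    assume "inf a q = inf a r"
    then have "inf a lo = inf a q" unfolding inf_q_r[symmetric] by (metis inf.idem inf_left_commute)
    then show False using ne inf_mono[OF order_refl lo_le(1)] inf_mono[OF order_refl p_le_q] by (metis antisym)
  qed
  ultimately show False using inf_collision[of p q r] ne by blast
qed

lemma q_le_sup_p_inf_a_r: "q \<le> sup p (inf a r)"
proof -
  have "q \<le> inf (inf (sup q p) (sup p r)) (sup a p)"
    using p_le_q le_hi(2) sup_a_p_eq_q sup_p_r by (simp add: sup.absorb1)
  also have "\<dots> \<le> sup (sup (sup p (inf a r)) (inf (sup q p) r)) (inf a (sup q p))"
    by (rule N5_law[OF N5])
  also have "\<dots> \<le> sup p (inf a r)"
    using p_le_q inf_q_r lo_le(1) inf_le2[of a p] by (simp add: inf_a_p_eq_q sup.absorb1 le_supI1)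
  finally show ?thesis .
qed

lemma inf_q_sup_a_r_le_p: "inf q (sup a r) \<le> p"
proof -
  have "inf q (sup a r) \<le> inf (inf (inf q (sup a r)) (sup (inf p q) r)) (sup a (inf p q))"
    using p_le_q le_hi(2) sup_a_p_eq_q sup_p_r by (simp add: inf.absorb1 le_infI1)
  also have "\<dots> \<le> sup (sup (inf p q) (inf q r)) (inf a q)"
    by (rule N5_law_dual[OF N5])
  also have "\<dots> \<le> p"
    using p_le_q inf_q_r lo_le(1) inf_le2[of a p] by (simp add: inf_a_p_eq_q inf.absorb1)
  finally show ?thesis .
qed

lemma inf_a_r_ne_lo: "inf a r \<noteq> inf a lo"
proof
  assume "inf a r = inf a lo"
  then have "inf a r \<le> p" using lo_le(1) by (metis inf.coboundedI2)
  then have "q \<le> p" using q_le_sup_p_inf_a_r by (simp add: sup.absorb1)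
  then show False using p_less_q by simp
qed

lemma sup_a_r_ne_hi: "sup a r \<noteq> sup a hi"
proof
  assume "sup a r = sup a hi"
  then have "q \<le> sup a r" using le_hi(2) by (metis sup.coboundedI2)
  then have "q \<le> p" using inf_q_sup_a_r_le_p by (simp add: inf.absorb1)
  then show False using p_less_q by simp
qed

lemma inf_a_r_eq_hi: "inf a r = inf a hi"
proof -
  have "inf a lo \<noteq> inf a hi"
    using inf_a_r_ne_lo inf_mono[OF order_refl lo_le(3)] inf_mono[OF order_refl le_hi(3)] by (metis antisym)
  then show ?thesis using inf_collision[of lo r hi] inf_a_r_ne_lo by auto
qed

lemma inf_a_p_eq_lo: "inf a p = inf a lo"
proof -
  have "inf a lo = inf (inf a p) (inf a r)"
    unfolding inf_p_r[symmetric] by (simp add: inf_assoc inf_left_commute)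
  then have "inf a p \<noteq> inf a r" using inf_a_r_ne_lo by (metis inf.idem)
  then show ?thesis using inf_collision[of lo p r] inf_a_r_ne_lo by auto
qed

lemma sup_a_p_ne_lo: "sup a p \<noteq> sup a lo"
proof
  assume "sup a p = sup a lo"
  then have "sup a p \<le> sup a r" using sup_mono[OF order_refl lo_le(3)] by simp
  then have "sup a hi = sup a r"
    unfolding sup_p_r[symmetric] by (metis sup.absorb2 sup_assoc sup_left_commute sup.idem)
  then show False using sup_a_r_ne_hi by simp
qed

lemma whitman_failure_le:
  "inf (sup a lo) (sup p (inf a r)) \<le> sup (inf (sup a lo) p) (inf a r)"
    (is "?W \<le> ?V")
proof -
  have lo_V: "lo \<le> ?V" using lo_le(1) by (auto intro: le_supI1)
  have V_W: "?V \<le> ?W" by (auto intro: le_infI1 le_infI2 le_supI1 le_supI2)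
  have "sup p (inf a r) \<le> hi" using le_hi(1,3) by (simp add: le_infI2)
  then have W_hi: "?W \<le> hi" by (simp add: le_infI2)
  have "?W \<le> inf (inf (sup ?W ?V) (sup ?V p)) (sup a ?V)"
  proof -
    have "sup p (inf a r) \<le> sup ?V p" by (auto intro: le_supI1)
    moreover have "sup a lo \<le> sup a ?V" using sup_mono[OF order_refl lo_V] .
    ultimately show ?thesis using V_W by (auto simp: sup.absorb1 intro: le_infI1 le_infI2)
  qed
  also have "\<dots> \<le> sup (sup (sup ?V (inf a p)) (inf (sup ?W ?V) p)) (inf a (sup ?W ?V))"
    by (rule N5_law[OF N5])
  also have "\<dots> \<le> ?V"
  proof -
    have "inf a p \<le> ?V" using inf_a_p_eq_lo lo_V by (metis inf.coboundedI2)
    moreover have "inf ?W p \<le> ?V" by (rule le_supI1, rule inf_mono) simp_all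
    moreover have "inf a ?W \<le> ?V"
      using inf_mono[OF order_refl W_hi] inf_a_r_eq_hi by (auto intro: le_supI2)
    ultimately show ?thesis using V_W by (simp add: sup.absorb1)
  qed
  finally show ?thesis .
qed

lemma not_whitman_condition: "\<not> whitman_condition TYPE('a)"
proof
  assume "whitman_condition TYPE('a)"
  then consider "sup a lo \<le> sup (inf (sup a lo) p) (inf a r)"
    | "sup p (inf a r) \<le> sup (inf (sup a lo) p) (inf a r)"
    | "inf (sup a lo) (sup p (inf a r)) \<le> inf (sup a lo) p"
    | "inf (sup a lo) (sup p (inf a r)) \<le> inf a r"
    using whitman_conditionD[OF _ whitman_failure_le] by blast
  then show False
  proof cases
    case 1
    have "a \<le> sup a lo" by simp
    also note 1
    also have "sup (inf (sup a lo) p) (inf a r) \<le> hi" using le_hi(1,3) by (simp add: le_infI2)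
    finally show False using parallel_hi unfolding incomparable_def by blast
  next
    case 2
    have "p \<le> sup p (inf a r)" by simp
    also note 2
    also have "sup (inf (sup a lo) p) (inf a r) \<le> sup a lo" by (simp add: le_infI1)
    finally have "sup a p \<le> sup a lo" by simp
    then show False using sup_a_p_ne_lo sup_mono[OF order_refl lo_le(1)] by (metis antisym)
  next
    case 3
    have "inf a r \<le> inf (sup a lo) (sup p (inf a r))" by (simp add: le_supI1)
    also note 3
    finally have "inf a r \<le> inf a lo" unfolding inf_p_r[symmetric] by simp
    then show False using inf_a_r_ne_lo inf_mono[OF order_refl lo_le(3)] by (metis antisym)
  next
    case 4
    have "lo \<le> inf (sup a lo) (sup p (inf a r))" using lo_le(1) by (simp add: le_supI1)
    also note 4
    finally show False using parallel_lo unfolding incomparable_def by simp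
  qed
qed

end

theorem lemma5p1:
  fixes K :: "'a::lattice set" and a :: 'a
  assumes "in_variety_N5 TYPE('a)"
    and "embeds_in_free_lattice TYPE('a) TYPE('x)"
    and "convex_sublattice K"
    and "\<forall>b\<in>K. a \<parallel> b"
  shows "(infinite {sup a b | b. b \<in> K} \<or> card {sup a b | b. b \<in> K} \<ge> 3)
       \<or> (infinite {inf a b | b. b \<in> K} \<or> card {inf a b | b. b \<in> K} \<ge> 3)
       \<or> distributive_on K"
proof (rule ccontr)
  assume "\<not> ?thesis"
  then have sups: "finite {sup a b | b. b \<in> K}" "card {sup a b | b. b \<in> K} \<le> 2"
    and infs: "finite {inf a b | b. b \<in> K}" "card {inf a b | b. b \<in> K} \<le> 2"
    and "\<not> distributive_on K"
    by auto
  have sup_closed: "\<And>x y. x \<in> K \<Longrightarrow> y \<in> K \<Longrightarrow> sup x y \<in> K"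
    and inf_closed: "\<And>x y. x \<in> K \<Longrightarrow> y \<in> K \<Longrightarrow> inf x y \<in> K"
    using assms(3) unfolding convex_sublattice_def by blast+
  obtain p q r where K: "p \<in> K" "q \<in> K" "r \<in> K"
    and pentagon: "p < q" "inf p r = inf q r" "sup p r = sup q r"
    using pentagon_if_not_distributive_on[OF sup_closed inf_closed
        N5_variety_meet_semidistrib[OF assms(1)] \<open>\<not> distributive_on K\<close>] by blast
  have S: "{inf p r, p, q, r, sup p r} \<subseteq> K" using K sup_closed inf_closed by blast
  have "pentagon_with_parallel a p q r (inf p r) (sup p r)"
  proof
    show "card (sup a ` {inf p r, p, q, r, sup p r}) \<le> 2"
      using sups S by (blast intro: order_trans[OF card_mono])
    show "card (inf a ` {inf p r, p, q, r, sup p r}) \<le> 2"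
      using infs S by (blast intro: order_trans[OF card_mono])
  qed (use assms(1,4) pentagon S in auto)
  then have "\<not> whitman_condition TYPE('a)"
    by (rule pentagon_with_parallel.not_whitman_condition)
  then show False using free_sublattice_whitman_condition[OF assms(2)] by blast
qed

end
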